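(* For every collection $A$, the set of pure Nash equilibrium outcomes of the game $\Gamma_{\mathcal{CUDD}}(A)$ is exactly $AG(A)\cup DIS(A)$, where $$AG(A)=\Big\{a\in A:\ a_i\ge\tfrac{\overline{m}_i+\underline{m}_i}{2}\text{ for } i=1,2\Big\},\qquad DIS(A)=\Big\{\tfrac{b+c}{2}:\ b\in A^1_{max},\ c\in A^2_{max}\Big\}.$$
   Context: Two players bargain over a collection (multiset) $A=(a^k)_{k\in[n]}$, $a^k=(a^k_1,a^k_2)\in[0,1]^2$, $a^k_i$ being player $i$'s utility; players are risk neutral and the outcome of a profile is the vector of expected utilities. Mechanism $\mathcal{CUDD}$ (coordination with uniform dictatorial disagreement): each player $i$ submits a pair $(g_i,d_i)\in[n]^2$; if $g_1=g_2$ the chosen index is $g_1$, otherwise the index is uniform over $\{d_1,d_2\}$ (i.e., each of $d_1,d_2$ with probability $1/2$, so $d_1$ with probability 1 if $d_1=d_2$). $\overline{m}_i=\max_k a^k_i$, $\underline{m}_i=\min_k a^k_i$, and $A^i_{max}=\{a^k\in A: a^k_i=\overline{m}_i\}$. *)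

theory Defs
  imports Complex_Main
begin

text \<open>A collection A = (a^k)_{k in [n]} is a function a :: nat => real * real on the
  index set [n] = {1..n}; fst (a k) / snd (a k) are the utilities of players 1 / 2.
  A strategy of a player is a pair (g, d) in [n] x [n].\<close>

definition util :: "(nat \<Rightarrow> real \<times> real) \<Rightarrow> nat \<Rightarrow> nat \<Rightarrow> real" where
  "util a i k = (if i = 1 then fst (a k) else snd (a k))"

definition strategies :: "nat \<Rightarrow> (nat \<times> nat) set" where
  "strategies n = {1..n} \<times> {1..n}"

text \<open>Expected utility of player i under CUDD when player 1 plays s1=(g1,d1) and
  player 2 plays s2=(g2,d2): if g1 = g2 the index g1 is chosen, otherwise the index is
  uniform over d1, d2 (each with probability 1/2).\<close>
definition cudd_payoff ::
  "(nat \<Rightarrow> real \<times> real) \<Rightarrow> nat \<Rightarrow> nat \<times> nat \<Rightarrow> nat \<times> nat \<Rightarrow> real" where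
  "cudd_payoff a i s1 s2 =
     (if fst s1 = fst s2 then util a i (fst s1)
      else (util a i (snd s1) + util a i (snd s2)) / 2)"

definition cudd_outcome ::
  "(nat \<Rightarrow> real \<times> real) \<Rightarrow> nat \<times> nat \<Rightarrow> nat \<times> nat \<Rightarrow> real \<times> real" where
  "cudd_outcome a s1 s2 = (cudd_payoff a 1 s1 s2, cudd_payoff a 2 s1 s2)"

definition cudd_nash :: "(nat \<Rightarrow> real \<times> real) \<Rightarrow> nat \<Rightarrow> nat \<times> nat \<Rightarrow> nat \<times> nat \<Rightarrow> bool" where
  "cudd_nash a n s1 s2 \<longleftrightarrow>
     s1 \<in> strategies n \<and> s2 \<in> strategies n \<and>
     (\<forall>t \<in> strategies n. cudd_payoff a 1 t s2 \<le> cudd_payoff a 1 s1 s2) \<and>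
     (\<forall>t \<in> strategies n. cudd_payoff a 2 s1 t \<le> cudd_payoff a 2 s1 s2)"

definition max_util :: "(nat \<Rightarrow> real \<times> real) \<Rightarrow> nat \<Rightarrow> nat \<Rightarrow> real" where
  "max_util a n i = Max (util a i ` {1..n})"

definition min_util :: "(nat \<Rightarrow> real \<times> real) \<Rightarrow> nat \<Rightarrow> nat \<Rightarrow> real" where
  "min_util a n i = Min (util a i ` {1..n})"

definition AG :: "(nat \<Rightarrow> real \<times> real) \<Rightarrow> nat \<Rightarrow> (real \<times> real) set" where
  "AG a n = {a k | k. k \<in> {1..n} \<and>
      (\<forall>i \<in> {1, 2}. util a i k \<ge> (max_util a n i + min_util a n i) / 2)}"

definition DIS :: "(nat \<Rightarrow> real \<times> real) \<Rightarrow> nat \<Rightarrow> (real \<times> real) set" where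
  "DIS a n = {((fst (a b) + fst (a c)) / 2, (snd (a b) + snd (a c)) / 2) | b c.
      b \<in> {1..n} \<and> c \<in> {1..n} \<and>
      util a 1 b = max_util a n 1 \<and> util a 2 c = max_util a n 2}"

end

theory Submission
  imports Defs
begin

text \<open>If the players coordinate on an index g, either can break coordination and
  pin down half of the outcome at his favourite alternative, so g survives only if it gives
  each player at least the average of his best and worst utilities; conversely, playing the
  worst alternative of the opponent as disagreement point makes every such g an equilibrium.
  If coordination fails, each player controls one half of the lottery and puts it on a best
  alternative, which yields exactly the points of DIS; naming one's own best alternative as
  both proposal and disagreement point (with distinct proposals) enforces them.\<close>

lemma cudd_payoff_agree [simp]: "cudd_payoff a i (g, d1) (g, d2) = util a i g"
  by (simp add: cudd_payoff_def)

lemma cudd_payoff_disagree [simp]: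
  "g1 \<noteq> g2 \<Longrightarrow> cudd_payoff a i (g1, d1) (g2, d2) = (util a i d1 + util a i d2) / 2"
  by (simp add: cudd_payoff_def)

lemma util_le_max_util: "k \<in> {1..n} \<Longrightarrow> util a i k \<le> max_util a n i"
  unfolding max_util_def by (rule Max_ge) auto

lemma min_util_le_util: "k \<in> {1..n} \<Longrightarrow> min_util a n i \<le> util a i k"
  unfolding min_util_def by (rule Min_le) auto

lemma max_util_attained:
  assumes "n \<ge> 1"
  obtains k where "k \<in> {1..n}" "util a i k = max_util a n i"
proof -
  have "max_util a n i \<in> util a i ` {1..n}"
    unfolding max_util_def using assms by (intro Max_in) auto
  then show ?thesis using that by force
qed

lemma min_util_attained:
  assumes "n \<ge> 1"
  obtains k where "k \<in> {1..n}" "util a i k = min_util a n i"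
proof -
  have "min_util a n i \<in> util a i ` {1..n}"
    unfolding min_util_def using assms by (intro Min_in) auto
  then show ?thesis using that by force
qed

lemma max_min_util_singleton: "max_util a 1 i = util a i 1" "min_util a 1 i = util a i 1"
  unfolding max_util_def min_util_def by auto

lemma cudd_nashI:
  assumes "s1 \<in> strategies n" "s2 \<in> strategies n"
    and "\<And>g d. g \<in> {1..n} \<Longrightarrow> d \<in> {1..n} \<Longrightarrow> cudd_payoff a 1 (g, d) s2 \<le> cudd_payoff a 1 s1 s2"
    and "\<And>g d. g \<in> {1..n} \<Longrightarrow> d \<in> {1..n} \<Longrightarrow> cudd_payoff a 2 s1 (g, d) \<le> cudd_payoff a 2 s1 s2"
  shows "cudd_nash a n s1 s2"
  using assms unfolding cudd_nash_def strategies_def by auto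

lemma cudd_nashD:
  assumes "cudd_nash a n s1 s2" "g \<in> {1..n}" "d \<in> {1..n}"
  shows "cudd_payoff a 1 (g, d) s2 \<le> cudd_payoff a 1 s1 s2"
    and "cudd_payoff a 2 s1 (g, d) \<le> cudd_payoff a 2 s1 s2"
  using assms unfolding cudd_nash_def strategies_def by auto

lemma cudd_nash_agree_in_AG:
  assumes nash: "cudd_nash a n (g, d1) (g, d2)"
  shows "a g \<in> AG a n"
proof -
  have g: "g \<in> {1..n}" and d: "d1 \<in> {1..n}" "d2 \<in> {1..n}"
    using nash by (auto simp: cudd_nash_def strategies_def)
  have "(max_util a n i + min_util a n i) / 2 \<le> util a i g" if i: "i \<in> {1, 2}" for i
  proof (cases "n = 1")
    case True
    then have "g = 1" using g by simp
    then show ?thesis using True max_min_util_singleton[of a i] by simp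
  next
    case False
    define g' where "g' = (if g = 1 then 2 else (1::nat))"
    have g': "g' \<in> {1..n}" "g' \<noteq> g"
      using False g by (auto simp: g'_def)
    obtain j where j: "j \<in> {1..n}" "util a i j = max_util a n i"
      using g max_util_attained[of n a i] by auto
    \<comment> \<open>deviate to a different proposal, with a best alternative as disagreement point\<close>
    have "\<exists>d \<in> {1..n}. (max_util a n i + util a i d) / 2 \<le> util a i g"
    proof (cases "i = 1")
      case True
      from cudd_nashD(1)[OF nash g'(1) j(1)] show ?thesis using True g' j d by auto
    next
      case False
      from cudd_nashD(2)[OF nash g'(1) j(1)] show ?thesis using False i g' j d
        by (auto simp: add.commute)
    qed
    then show ?thesis using min_util_le_util[of _ n a i] by fastforce
  qed
  then show ?thesis unfolding AG_def using g by blast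
qed

lemma cudd_nash_disagree_in_DIS:
  assumes nash: "cudd_nash a n (g1, d1) (g2, d2)" and "g1 \<noteq> g2"
  shows "cudd_outcome a (g1, d1) (g2, d2) \<in> DIS a n"
proof -
  have g: "g1 \<in> {1..n}" "g2 \<in> {1..n}" and d: "d1 \<in> {1..n}" "d2 \<in> {1..n}"
    using nash by (auto simp: cudd_nash_def strategies_def)
  then have "n \<ge> 1" by simp
  then obtain j1 j2 where j: "j1 \<in> {1..n}" "util a 1 j1 = max_util a n 1"
    "j2 \<in> {1..n}" "util a 2 j2 = max_util a n 2"
    by (metis max_util_attained)
  from cudd_nashD(1)[OF nash g(1) j(1)] have "util a 1 d1 = max_util a n 1"
    using \<open>g1 \<noteq> g2\<close> j util_le_max_util[OF d(1), of a 1] by simp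
  moreover from cudd_nashD(2)[OF nash g(2) j(3)] have "util a 2 d2 = max_util a n 2"
    using \<open>g1 \<noteq> g2\<close> j util_le_max_util[OF d(2), of a 2] by simp
  moreover have "cudd_outcome a (g1, d1) (g2, d2) =
      ((fst (a d1) + fst (a d2)) / 2, (snd (a d1) + snd (a d2)) / 2)"
    using \<open>g1 \<noteq> g2\<close> by (simp add: cudd_outcome_def util_def)
  ultimately show ?thesis unfolding DIS_def using d by blast
qed

lemma cudd_nash_outcome_in_AG_Un_DIS:
  assumes "cudd_nash a n s1 s2"
  shows "cudd_outcome a s1 s2 \<in> AG a n \<union> DIS a n"
proof -
  obtain g1 d1 g2 d2 where s: "s1 = (g1, d1)" "s2 = (g2, d2)" by fastforce
  show ?thesis
  proof (cases "g1 = g2")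
    case True
    then have "cudd_outcome a s1 s2 = a g1" by (simp add: s cudd_outcome_def util_def)
    then show ?thesis using cudd_nash_agree_in_AG assms True s by auto
  next
    case False
    then show ?thesis using cudd_nash_disagree_in_DIS assms s by auto
  qed
qed

lemma AG_subset_cudd_nash_outcomes:
  assumes "x \<in> AG a n"
  shows "\<exists>s1 s2. x = cudd_outcome a s1 s2 \<and> cudd_nash a n s1 s2"
proof -
  obtain k where x: "x = a k" and k: "k \<in> {1..n}"
    and above: "\<And>i. i \<in> {1, 2} \<Longrightarrow> (max_util a n i + min_util a n i) / 2 \<le> util a i k"
    using assms unfolding AG_def by blast
  then have "n \<ge> 1" by simp
  then obtain j1 j2 where j: "j1 \<in> {1..n}" "util a 1 j1 = min_util a n 1"
    "j2 \<in> {1..n}" "util a 2 j2 = min_util a n 2"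
    by (metis min_util_attained)
  \<comment> \<open>each player's disagreement point is the opponent's worst alternative\<close>
  have "cudd_nash a n (k, j2) (k, j1)"
  proof (rule cudd_nashI)
    fix g d assume "d \<in> {1..n}"
    then show "cudd_payoff a 1 (g, d) (k, j1) \<le> cudd_payoff a 1 (k, j2) (k, j1)"
      using util_le_max_util[of d n a 1] above[of 1] j by (auto simp: cudd_payoff_def)
  next
    fix g d assume "d \<in> {1..n}"
    then show "cudd_payoff a 2 (k, j2) (g, d) \<le> cudd_payoff a 2 (k, j2) (k, j1)"
      using util_le_max_util[of d n a 2] above[of 2] j by (auto simp: cudd_payoff_def)
  qed (use k j in \<open>auto simp: strategies_def\<close>)
  moreover have "x = cudd_outcome a (k, j2) (k, j1)"
    by (simp add: x cudd_outcome_def util_def)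
  ultimately show ?thesis by blast
qed

lemma DIS_subset_cudd_nash_outcomes:
  assumes "x \<in> DIS a n"
  shows "\<exists>s1 s2. x = cudd_outcome a s1 s2 \<and> cudd_nash a n s1 s2"
proof -
  obtain b c where x: "x = ((fst (a b) + fst (a c)) / 2, (snd (a b) + snd (a c)) / 2)"
    and bc: "b \<in> {1..n}" "c \<in> {1..n}"
    and best: "util a 1 b = max_util a n 1" "util a 2 c = max_util a n 2"
    using assms unfolding DIS_def by blast
  show ?thesis
  proof (cases "b = c")
    case True
    have "\<forall>i \<in> {1, 2}. (max_util a n i + min_util a n i) / 2 \<le> util a i b"
      using best True min_util_le_util[OF bc(1), of a 1] min_util_le_util[OF bc(1), of a 2]
      by auto
    then have "a b \<in> AG a n" using bc unfolding AG_def by blast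
    moreover have "x = a b" using True x by (simp add: prod_eq_iff)
    ultimately show ?thesis using AG_subset_cudd_nash_outcomes by blast
  next
    case False
    have "cudd_nash a n (b, b) (c, c)"
    proof (rule cudd_nashI)
      fix g d assume "d \<in> {1..n}"
      then show "cudd_payoff a 1 (g, d) (c, c) \<le> cudd_payoff a 1 (b, b) (c, c)"
        using util_le_max_util[of _ n a 1] bc best False by (auto simp: cudd_payoff_def)
    next
      fix g d assume "d \<in> {1..n}"
      then show "cudd_payoff a 2 (b, b) (g, d) \<le> cudd_payoff a 2 (b, b) (c, c)"
        using util_le_max_util[of _ n a 2] bc best False by (auto simp: cudd_payoff_def)
    qed (use bc in \<open>auto simp: strategies_def\<close>)
    moreover have "x = cudd_outcome a (b, b) (c, c)"
      using False by (simp add: x cudd_outcome_def util_def)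
    ultimately show ?thesis by blast
  qed
qed

theorem proposition5:
  fixes a :: "nat \<Rightarrow> real \<times> real" and n :: nat
  assumes "n \<ge> 1"
    and "\<forall>k \<in> {1..n}. fst (a k) \<in> {0..1} \<and> snd (a k) \<in> {0..1}"
  shows "{cudd_outcome a s1 s2 | s1 s2. cudd_nash a n s1 s2} = AG a n \<union> DIS a n"
  using cudd_nash_outcome_in_AG_Un_DIS AG_subset_cudd_nash_outcomes
    DIS_subset_cudd_nash_outcomes
  by blast

end
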